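(* In the algebra $\mathcal{SL}_{\hbar,q}$ generated by $b,c,g$ with relations $$q^2gb-bg=\hbar(q+q^{-1})b,\quad gc-q^2cg=-\hbar(q+q^{-1})c,\quad (q^2+1)(bc-cb)+(q^2-1)g^2=\hbar(q+q^{-1})g,$$ the matrix $$L=\begin{pmatrix} q[2]_q^{-1}g & b\\ c & -q^{-1}[2]_q^{-1}g\end{pmatrix}$$ satisfies $L^2-q^{-1}\hbar L+\sigma\,\mathrm{id}=0$, where $$\sigma=-[2]_q^{-1}\mathrm{Tr}_RL^2=-[2]_q^{-1}\big([2]_q^{-1}g^2+q^{-1}bc+q\,cb\big)$$ is central in $\mathcal{SL}_{\hbar,q}$. Consequently, in the quotient $\mathcal{SL}_{\hbar,q}/\langle\sigma-\alpha\rangle$ ($\alpha\in\mathbb{K}$ with $q^{-2}\hbar^2-4\alpha\ne0$), with $\mu_{0,1}=(q^{-1}\hbar\mp\sqrt{q^{-2}\hbar^2-4\alpha})/2$ and $e_0=(L-\mu_1)/(\mu_0-\mu_1)$, $e_1=(L-\mu_0)/(\mu_1-\mu_0)$, $$\mathrm{Tr}_Re_0=\frac{[2]_q}{2}+\frac{[2]_q\hbar}{2\sqrt{\hbar^2-4\alpha q^2}},\qquad \mathrm{Tr}_Re_1=\frac{[2]_q}{2}-\frac{[2]_q\hbar}{2\sqrt{\hbar^2-4\alpha q^2}},$$ with $\sqrt{\hbar^2-4\alpha q^2}=q\sqrt{q^{-2}\hbar^2-4\alpha}$.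
   Context: Here $q$ is generic, $\hbar\in\mathbb{K}$, $[m]_q=(q^m-q^{-m})/(q-q^{-1})$, so $[2]_q=q+q^{-1}$. Products of matrices with noncommuting entries are $(MN)_i^{\;j}=\sum_aM_i^{\;a}N_a^{\;j}$ (row index $i$, column index $j$). For a $2\times2$ matrix $M$ with entries in the algebra, $\mathrm{Tr}_RM=q^{-1}M_1^{\;1}+q\,M_2^{\;2}$ (the categorical trace for the Hecke symmetry $R$ with $R(x_1\otimes x_1)=q\,x_1\otimes x_1$, $R(x_2\otimes x_2)=q\,x_2\otimes x_2$, and matrix $\begin{pmatrix}\lambda&1\\1&0\end{pmatrix}$, $\lambda=q-q^{-1}$, on the span of $x_1\otimes x_2,x_2\otimes x_1$). The algebra above is the traceless part $\mathcal{SL}_{\hbar,q}$ of the modified reflection equation algebra for this $R$, with $g=a-d$ where $L=\begin{pmatrix}a&b\\c&d\end{pmatrix}$ and $q^{-1}a+qd=0$. The quotient by $\sigma-\alpha$ is the quantum non-commutative sphere. *)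

theory Defs
  imports Main
begin

text \<open>2x2 matrices with (possibly noncommuting) entries, stored as
  (M11, M12, M21, M22); product (MN)_i^j = sum_a M_i^a N_a^j.\<close>
type_synonym 'a mat2 = "'a \<times> 'a \<times> 'a \<times> 'a"

fun m2mul :: "'a::ring_1 mat2 \<Rightarrow> 'a mat2 \<Rightarrow> 'a mat2" where
  "m2mul (a, b, c, d) (e, f, g, h) = (a*e + b*g, a*f + b*h, c*e + d*g, c*f + d*h)"

fun m2add :: "'a::ring_1 mat2 \<Rightarrow> 'a mat2 \<Rightarrow> 'a mat2" where
  "m2add (a, b, c, d) (e, f, g, h) = (a + e, b + f, c + g, d + h)"

fun m2smul :: "'a::ring_1 \<Rightarrow> 'a mat2 \<Rightarrow> 'a mat2" where
  "m2smul s (a, b, c, d) = (s*a, s*b, s*c, s*d)"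

definition m2id :: "'a::ring_1 mat2" where
  "m2id = (1, 0, 0, 1)"

definition m2zero :: "'a::ring_1 mat2" where
  "m2zero = (0, 0, 0, 0)"

definition qtwo :: "'k::field \<Rightarrow> 'k" where
  "qtwo q = q + inverse q"

fun trR :: "('k::field \<Rightarrow> 'a::ring_1) \<Rightarrow> 'k \<Rightarrow> 'a mat2 \<Rightarrow> 'a" where
  "trR emb q (a, b, c, d) = emb (inverse q) * a + emb q * d"

text \<open>A K-algebra structure on a ring A: a unital ring homomorphism K -> A with central image.\<close>
definition is_algebra_emb :: "('k::field \<Rightarrow> 'a::ring_1) \<Rightarrow> bool" where
  "is_algebra_emb emb \<longleftrightarrow>
     emb 1 = 1 \<and> (\<forall>x y. emb (x + y) = emb x + emb y) \<and>
     (\<forall>x y. emb (x * y) = emb x * emb y) \<and> (\<forall>x y. emb x * y = y * emb x)"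

definition Lmat :: "('k::field \<Rightarrow> 'a::ring_1) \<Rightarrow> 'k \<Rightarrow> 'a \<Rightarrow> 'a \<Rightarrow> 'a \<Rightarrow> 'a mat2" where
  "Lmat emb q b c g = (emb (q / qtwo q) * g, b, c, - emb (inverse q / qtwo q) * g)"

end

theory Submission
  imports Defs
begin

text \<open>Write \<open>L = (a b; c d)\<close> with \<open>a = q g / [2]\<^sub>q\<close> and \<open>d = - q\<^sup>-\<^sup>1 g / [2]\<^sub>q\<close>, so that
  \<open>Tr\<^sub>R L = 0\<close> and \<open>a - d = g\<close>. The first two relations are the off-diagonal entries of
  \<open>L\<^sup>2 - q\<^sup>-\<^sup>1\<hbar> L\<close>: \<open>a b + b d = q\<^sup>-\<^sup>1\<hbar> b\<close> and \<open>c a + d c = q\<^sup>-\<^sup>1\<hbar> c\<close>. The third says that the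
  two diagonal entries of \<open>L\<^sup>2 - q\<^sup>-\<^sup>1\<hbar> L\<close> coincide; as \<open>Tr\<^sub>R L = 0\<close>, their common value is
  \<open>[2]\<^sub>q\<^sup>-\<^sup>1 Tr\<^sub>R L\<^sup>2 = - \<sigma>\<close>. Centrality of \<open>\<sigma>\<close> then comes for free: \<open>\<sigma> I = - (L\<^sup>2 - q\<^sup>-\<^sup>1\<hbar> L)\<close>
  commutes with \<open>L\<close> as a matrix, so \<open>\<sigma>\<close> commutes with every entry of \<open>L\<close>. Finally
  \<open>Tr\<^sub>R (L - \<mu>) = - \<mu> [2]\<^sub>q\<close>, which gives the traces of \<open>e\<^sub>0\<close> and \<open>e\<^sub>1\<close>; this last step does
  not use \<open>\<sigma> = \<alpha>\<close> or the value of \<open>s\<^sup>2\<close>.\<close>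

locale algebra_emb =
  fixes emb :: "'k::field \<Rightarrow> 'a::ring_1"
  assumes is_algebra_emb: "is_algebra_emb emb"
begin

lemma emb_one [simp]: "emb 1 = 1"
  and emb_add: "emb (x + y) = emb x + emb y"
  and emb_mult: "emb (x * y) = emb x * emb y"
  and emb_central: "emb x * z = z * emb x"
  using is_algebra_emb unfolding is_algebra_emb_def by blast+

lemma emb_zero [simp]: "emb 0 = 0"
  using emb_add [of 0 0] by simp

lemma emb_uminus: "emb (- x) = - emb x"
  using emb_add [of x "- x"] by (simp add: add_eq_0_iff2)

lemma emb_diff: "emb (x - y) = emb x - emb y"
  using emb_add [of "x - y" y] by (simp add: eq_diff_eq)

lemma emb_mult_left: "emb x * (emb y * z) = emb (x * y) * z"
  by (simp add: emb_mult mult.assoc)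

lemma mult_emb_left: "z * (emb x * w) = emb x * (z * w)"
  by (metis emb_central mult.assoc)

lemma emb_add_left: "emb x * z + emb y * z = emb (x + y) * z"
  by (simp add: emb_add distrib_right)

lemma emb_diff_left: "emb x * z - emb y * z = emb (x - y) * z"
  by (simp add: emb_diff left_diff_distrib)

lemma emb_cancel:
  assumes "x \<noteq> 0" and "emb x * y = emb x * z"
  shows "y = z"
  using arg_cong [OF assms(2), of "\<lambda>w. emb (inverse x) * w"] assms(1)
  by (simp add: emb_mult_left)

end

lemma m2_quadratic_relation_centralizes:
  fixes a b c d :: "'a::ring_1"
  assumes u_central: "\<And>x. u * x = x * u"
    and quadratic: "m2add (m2add (m2mul (a, b, c, d) (a, b, c, d)) (m2smul u (a, b, c, d)))
      (m2smul s m2id) = m2zero"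
  shows "s * a = a * s" and "s * b = b * s" and "s * c = c * s" and "s * d = d * s"
proof -
  have u_left: "x * (u * y) = u * (x * y)" for x y
    by (metis u_central mult.assoc)
  define N where "N = m2add (m2mul (a, b, c, d) (a, b, c, d)) (m2smul u (a, b, c, d))"
  have "m2mul (a, b, c, d) N = m2mul N (a, b, c, d)"
    unfolding N_def by (simp add: algebra_simps u_left)
  moreover have "N = m2smul (- s) m2id"
    using quadratic unfolding N_def
    by (cases "m2mul (a, b, c, d) (a, b, c, d)") (simp add: m2id_def m2zero_def eq_neg_iff_add_eq_0)
  ultimately show "s * a = a * s" "s * b = b * s" "s * c = c * s" "s * d = d * s"
    by (simp_all add: m2id_def)
qed

lemma qtwo_nonzero:
  fixes q :: "'k::field"
  assumes "q \<noteq> 0" and "q ^ 4 \<noteq> 1"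
  shows "qtwo q \<noteq> 0"
proof
  assume "qtwo q = 0"
  then have "q ^ 2 = - 1"
    using assms(1) by (simp add: qtwo_def field_simps power2_eq_square eq_neg_iff_add_eq_0)
  have "q ^ 4 = (q ^ 2) ^ 2"
    by (simp flip: power_mult)
  also have "\<dots> = 1"
    using \<open>q ^ 2 = - 1\<close> by simp
  finally show False
    using assms(2) by simp
qed

locale sl_hbar_q = algebra_emb emb for emb :: "'k::field \<Rightarrow> 'a::ring_1" +
  fixes q hbar :: 'k and b c g :: 'a
  assumes q_nonzero: "q \<noteq> 0" and qtwo_nonzero: "qtwo q \<noteq> 0"
    and rel1: "emb (q^2) * g * b - b * g = emb (hbar * qtwo q) * b"
    and rel2: "g * c - emb (q^2) * c * g = - (emb (hbar * qtwo q) * c)"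
    and rel3: "emb (q^2 + 1) * (b * c - c * b) + emb (q^2 - 1) * g^2 = emb (hbar * qtwo q) * g"
begin

abbreviation "\<alpha> \<equiv> q / qtwo q"
abbreviation "\<beta> \<equiv> inverse q / qtwo q"
abbreviation "a \<equiv> emb \<alpha> * g"
abbreviation "d \<equiv> - emb \<beta> * g"
abbreviation "L \<equiv> Lmat emb q b c g"

definition sigma :: 'a where
  "sigma = - (emb (inverse (qtwo q)) * trR emb q (m2mul L L))"

lemma Lmat_eq: "L = (a, b, c, d)"
  by (simp add: Lmat_def)

lemma q_sq_plus_one_eq: "q^2 + 1 = q * qtwo q"
  using q_nonzero by (simp add: qtwo_def distrib_left power2_eq_square)

lemma q_sq_plus_one_nonzero: "q^2 + 1 \<noteq> 0"
  using q_nonzero qtwo_nonzero by (simp add: q_sq_plus_one_eq)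

lemma alpha_plus_beta: "\<alpha> + \<beta> = 1"
  using qtwo_nonzero by (simp add: qtwo_def flip: add_divide_distrib)

lemma alpha_sq_minus_beta_sq: "\<alpha>^2 - \<beta>^2 = \<alpha> - \<beta>"
proof -
  have "\<alpha>^2 - \<beta>^2 = (\<alpha> - \<beta>) * (\<alpha> + \<beta>)"
    by (simp add: power2_eq_square algebra_simps)
  then show ?thesis
    by (simp add: alpha_plus_beta)
qed

lemma beta_q_sq: "\<beta> * q^2 = \<alpha>"
  using q_nonzero by (simp add: power2_eq_square field_simps)

lemma a_minus_d: "a - d = g"
  by (simp add: emb_add_left alpha_plus_beta)

lemma trR_L: "trR emb q L = 0"
  using q_nonzero by (simp add: Lmat_eq emb_mult_left emb_diff_left)

lemma a_sq: "a * a = emb (\<alpha>^2) * g^2"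
  by (simp add: mult.assoc mult_emb_left [of g] emb_mult_left power2_eq_square)

lemma d_sq: "d * d = emb (\<beta>^2) * g^2"
  by (simp add: mult.assoc mult_emb_left [of g] emb_mult_left power2_eq_square)

lemma a_b_plus_b_d: "a * b + b * d = emb (inverse q * hbar) * b"
proof -
  have "emb \<beta> * (emb (q^2) * g * b - b * g) = emb \<beta> * (emb (hbar * qtwo q) * b)"
    using rel1 by simp
  then have "emb (\<beta> * q^2) * (g * b) - emb \<beta> * (b * g) = emb (\<beta> * (hbar * qtwo q)) * b"
    by (simp only: right_diff_distrib mult.assoc emb_mult_left)
  moreover have "\<beta> * (hbar * qtwo q) = inverse q * hbar"
    using qtwo_nonzero by simp
  ultimately show ?thesis
    unfolding beta_q_sq by (simp add: mult.assoc mult_emb_left [of b])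
qed

lemma c_a_plus_d_c: "c * a + d * c = emb (inverse q * hbar) * c"
proof -
  have "emb \<beta> * (g * c) - emb \<alpha> * (c * g) = emb \<beta> * (g * c - emb (q^2) * c * g)"
    by (simp only: right_diff_distrib mult.assoc emb_mult_left beta_q_sq)
  also have "\<dots> = - (emb (\<beta> * (hbar * qtwo q)) * c)"
    using rel2 by (simp add: emb_mult_left)
  also have "\<dots> = - (emb (inverse q * hbar) * c)"
    using qtwo_nonzero by simp
  finally have "emb \<alpha> * (c * g) - emb \<beta> * (g * c) = emb (inverse q * hbar) * c"
    using minus_diff_eq [of "emb \<beta> * (g * c)" "emb \<alpha> * (c * g)"] by simp
  then show ?thesis
    by (simp add: mult.assoc mult_emb_left [of c])
qed

lemma commutator_b_c: "b * c - c * b = emb (inverse q * hbar) * g - emb (\<alpha> - \<beta>) * g^2"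
proof -
  have "emb (inverse (q^2 + 1)) * (emb (q^2 + 1) * (b * c - c * b) + emb (q^2 - 1) * g^2)
      = emb (inverse (q^2 + 1)) * (emb (hbar * qtwo q) * g)"
    using rel3 by simp
  then have "emb (inverse (q^2 + 1) * (q^2 + 1)) * (b * c - c * b)
        + emb (inverse (q^2 + 1) * (q^2 - 1)) * g^2
      = emb (inverse (q^2 + 1) * (hbar * qtwo q)) * g"
    by (simp only: distrib_left emb_mult_left)
  moreover have "inverse (q^2 + 1) * (q^2 + 1) = 1"
    using q_sq_plus_one_nonzero by simp
  moreover have "inverse (q^2 + 1) * (q^2 - 1) = \<alpha> - \<beta>"
    unfolding q_sq_plus_one_eq using q_nonzero qtwo_nonzero by (simp add: power2_eq_square field_simps)
  moreover have "inverse (q^2 + 1) * (hbar * qtwo q) = inverse q * hbar"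
    unfolding q_sq_plus_one_eq using q_nonzero qtwo_nonzero by (simp add: field_simps)
  ultimately show ?thesis
    by (simp add: eq_diff_eq)
qed

lemma diagonal_eq:
  "a * a + b * c - emb (inverse q * hbar) * a = c * b + d * d - emb (inverse q * hbar) * d"
proof -
  have "(a * a + b * c - emb (inverse q * hbar) * a) - (c * b + d * d - emb (inverse q * hbar) * d)
      = (a * a - d * d) + (b * c - c * b) - emb (inverse q * hbar) * (a - d)"
    by (simp add: algebra_simps)
  also have "\<dots> = 0"
    unfolding a_sq d_sq a_minus_d commutator_b_c by (simp add: emb_diff_left alpha_sq_minus_beta_sq)
  finally show ?thesis
    by simp
qed

lemma trR_L_sq:
  "trR emb q (m2mul L L) = emb (inverse (qtwo q)) * g^2 + emb (inverse q) * (b * c) + emb q * (c * b)"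
proof -
  have "inverse q * \<alpha>^2 + q * \<beta>^2 = inverse (qtwo q) * (\<alpha> + \<beta>)"
    using q_nonzero qtwo_nonzero by (simp add: power2_eq_square field_simps)
  then have coeff: "inverse q * \<alpha>^2 + q * \<beta>^2 = inverse (qtwo q)"
    by (simp add: alpha_plus_beta)
  have "emb (inverse q) * (a * a) + emb q * (d * d) = emb (inverse q * \<alpha>^2 + q * \<beta>^2) * g^2"
    unfolding a_sq d_sq by (simp only: emb_mult_left emb_add_left)
  then have "emb (inverse q) * (a * a) + emb q * (d * d) = emb (inverse (qtwo q)) * g^2"
    unfolding coeff .
  then show ?thesis
    by (simp add: Lmat_eq algebra_simps)
qed

lemma sigma_eq:
  "sigma = - (emb (inverse (qtwo q)) *
     (emb (inverse (qtwo q)) * g^2 + emb (inverse q) * (b * c) + emb q * (c * b)))"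
  unfolding sigma_def trR_L_sq ..

lemma sigma_eq_diagonal: "sigma = - (a * a + b * c - emb (inverse q * hbar) * a)"
proof -
  let ?X = "a * a + b * c - emb (inverse q * hbar) * a"
  have "trR emb q (m2mul L L) = emb (inverse q) * ?X
      + emb q * (c * b + d * d - emb (inverse q * hbar) * d) + emb (inverse q * hbar) * trR emb q L"
    by (simp add: Lmat_eq algebra_simps emb_mult_left)
  also have "\<dots> = emb (inverse q + q) * ?X"
    unfolding diagonal_eq [symmetric] trR_L by (simp add: emb_add_left)
  finally show ?thesis
    using qtwo_nonzero by (simp add: sigma_def qtwo_def add.commute emb_mult_left)
qed

lemma cayley_hamilton:
  "m2add (m2add (m2mul L L) (m2smul (- emb (inverse q * hbar)) L)) (m2smul sigma m2id) = m2zero"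
proof -
  have "sigma = - (c * b + d * d - emb (inverse q * hbar) * d)"
    by (simp add: sigma_eq_diagonal diagonal_eq)
  then show ?thesis
    using a_b_plus_b_d c_a_plus_d_c
    by (simp add: Lmat_eq m2id_def m2zero_def sigma_eq_diagonal algebra_simps)
qed

lemma sigma_central: "sigma * b = b * sigma" "sigma * c = c * sigma" "sigma * g = g * sigma"
proof -
  have "- emb (inverse q * hbar) * x = x * - emb (inverse q * hbar)" for x
    by (simp add: emb_central)
  note centralizes = m2_quadratic_relation_centralizes [OF this cayley_hamilton [unfolded Lmat_eq]]
  show "sigma * b = b * sigma" "sigma * c = c * sigma"
    by (fact centralizes)+
  have "emb \<alpha> * (sigma * g) = emb \<alpha> * (g * sigma)"
    using centralizes(1) by (simp add: mult.assoc mult_emb_left [of sigma])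
  moreover have "\<alpha> \<noteq> 0"
    using q_nonzero qtwo_nonzero by simp
  ultimately show "sigma * g = g * sigma"
    using emb_cancel by blast
qed

lemma trR_shifted_L:
  "trR emb q (m2smul (emb k) (m2add L (m2smul (- emb \<mu>) m2id))) = emb (- (k * \<mu> * qtwo q))"
proof -
  have "trR emb q (m2smul (emb k) (m2add L (m2smul (- emb \<mu>) m2id)))
      = emb k * trR emb q L - emb (k * \<mu> * (inverse q + q))"
    by (simp add: Lmat_eq m2id_def algebra_simps emb_mult_left emb_add flip: emb_mult)
  then show ?thesis
    by (simp add: trR_L qtwo_def add.commute emb_uminus)
qed

end

lemma eigenvalue_gap:
  fixes x s :: "'k::field_char_0"
  shows "(x - s) / 2 - (x + s) / 2 = - s" and "(x + s) / 2 - (x - s) / 2 = s"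
  by (simp_all add: field_simps)

lemma idempotent_trace_coeffs:
  fixes q hbar s :: "'k::field_char_0"
  assumes "q \<noteq> 0" and "s \<noteq> 0"
  shows "- (inverse ((inverse q * hbar - s) / 2 - (inverse q * hbar + s) / 2)
            * ((inverse q * hbar + s) / 2) * qtwo q)
      = qtwo q / 2 + qtwo q * hbar / (2 * (q * s))"
    and "- (inverse ((inverse q * hbar + s) / 2 - (inverse q * hbar - s) / 2)
            * ((inverse q * hbar - s) / 2) * qtwo q)
      = qtwo q / 2 - qtwo q * hbar / (2 * (q * s))"
  using assms by (simp_all add: eigenvalue_gap field_simps)

theorem mainTheorem8:
  fixes emb :: "'k::field_char_0 \<Rightarrow> 'a::ring_1"
    and q hbar :: 'k
    and b c g :: 'a
  assumes alg: "is_algebra_emb emb"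
    and q_generic: "\<forall>n::nat. n > 0 \<longrightarrow> q ^ n \<noteq> 1"
    and q_nz: "q \<noteq> 0"
    and rel1: "emb (q^2) * g * b - b * g = emb (hbar * qtwo q) * b"
    and rel2: "g * c - emb (q^2) * c * g = - (emb (hbar * qtwo q) * c)"
    and rel3: "emb (q^2 + 1) * (b * c - c * b) + emb (q^2 - 1) * g^2 = emb (hbar * qtwo q) * g"
  shows
    "let L = Lmat emb q b c g;
         \<sigma> = - (emb (inverse (qtwo q)) * trR emb q (m2mul L L))
     in \<sigma> = - (emb (inverse (qtwo q)) *
                (emb (inverse (qtwo q)) * g^2 + emb (inverse q) * (b * c) + emb q * (c * b)))
      \<and> \<sigma> * b = b * \<sigma> \<and> \<sigma> * c = c * \<sigma> \<and> \<sigma> * g = g * \<sigma>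
      \<and> m2add (m2add (m2mul L L) (m2smul (- emb (inverse q * hbar)) L)) (m2smul \<sigma> m2id) = m2zero
      \<and> (\<forall>\<alpha> s::'k. \<sigma> = emb \<alpha> \<longrightarrow> s^2 = (inverse q)^2 * hbar^2 - 4 * \<alpha> \<longrightarrow> s \<noteq> 0 \<longrightarrow>
           (let \<mu>0 = (inverse q * hbar - s) / 2;
                \<mu>1 = (inverse q * hbar + s) / 2;
                e0 = m2smul (emb (inverse (\<mu>0 - \<mu>1))) (m2add L (m2smul (- emb \<mu>1) m2id));
                e1 = m2smul (emb (inverse (\<mu>1 - \<mu>0))) (m2add L (m2smul (- emb \<mu>0) m2id))
            in trR emb q e0 = emb (qtwo q / 2 + qtwo q * hbar / (2 * (q * s)))
             \<and> trR emb q e1 = emb (qtwo q / 2 - qtwo q * hbar / (2 * (q * s)))))"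
proof -
  have "qtwo q \<noteq> 0"
    using q_nz q_generic [rule_format, of 4] by (intro qtwo_nonzero) simp_all
  then interpret sl_hbar_q emb q hbar b c g
    using alg q_nz rel1 rel2 rel3 by unfold_locales
  show ?thesis
    unfolding Let_def sigma_def [symmetric] trR_shifted_L
    by (intro conjI allI impI sigma_eq sigma_central cayley_hamilton)
      (simp_all only: idempotent_trace_coeffs q_nz not_False_eq_True)
qed

end
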